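(* If $X$ is an (infinite) $T_1$-space, then $|X|\le 2^{nu_s(X)\cdot 2^{s(X)}}$.
   Context: For a space $X$ and $A\subseteq X$, the $\theta$-closure of $A$ is $\mathrm{cl}_\theta(A):=\{y\in X:\ \overline{B}\cap A\neq\emptyset$ for every open neighborhood $B$ of $y\}$. The non-Urysohn number of $X$ with respect to singletons is $nu_s(X):=1+\sup\{|\mathrm{cl}_\theta(\{x\})|:x\in X\}$. $s(X)$ denotes the spread of $X$ (supremum of cardinalities of discrete subspaces, plus $\omega$). Throughout, "space" means infinite topological space. *)

theory Defs
  imports "HOL-Analysis.Analysis" "HOL-Library.Equipollence"
begin

definition theta_closure :: "'a topology \<Rightarrow> 'a set \<Rightarrow> 'a set" where
  "theta_closure X A =
     {y \<in> topspace X. \<forall>B. openin X B \<and> y \<in> B \<longrightarrow> (X closure_of B) \<inter> A \<noteq> {}}"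

text \<open>K (a set of any type) has the cardinality of the supremum of the cardinalities
  of the sets F i, i in I: it is an upper bound, and it is below every upper bound
  (upper bounds taken among sets of the same type as K; this suffices since any
  upper bound of K's type has a subset of exactly the supremum's size).\<close>
definition is_card_sup :: "'i set \<Rightarrow> ('i \<Rightarrow> 'a set) \<Rightarrow> 'b set \<Rightarrow> bool" where
  "is_card_sup I F K \<longleftrightarrow>
     (\<forall>i\<in>I. F i \<lesssim> K) \<and> (\<forall>K'::'b set. (\<forall>i\<in>I. F i \<lesssim> K') \<longrightarrow> K \<lesssim> K')"

text \<open>N has cardinality nu_s(X) = 1 + sup { |cl_theta({x})| : x in X }.\<close>
definition is_nu_s :: "'a topology \<Rightarrow> 'b set \<Rightarrow> bool" where
  "is_nu_s X N \<longleftrightarrow>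
     (\<exists>K::'b set. is_card_sup (topspace X) (\<lambda>x. theta_closure X {x}) K
                 \<and> N \<approx> ({()} <+> K))"

definition discrete_subspace :: "'a topology \<Rightarrow> 'a set \<Rightarrow> bool" where
  "discrete_subspace X D \<longleftrightarrow> D \<subseteq> topspace X \<and> subtopology X D = discrete_topology D"

text \<open>S has cardinality s(X) = sup { |D| : D discrete subspace } + omega.\<close>
definition is_spread :: "'a topology \<Rightarrow> 'b set \<Rightarrow> bool" where
  "is_spread X S \<longleftrightarrow>
     (\<exists>K::'b set. is_card_sup {D. discrete_subspace X D} id K
                 \<and> S \<approx> (K <+> (UNIV :: nat set)))"

end

theory Submission
  imports Defs
begin

text \<open>
  For a point y, Shapirovskii's lemma applied to a cover of X - cl_\<theta>{y} by open sets whose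
  closures miss y gives a discrete, hence small (at most s(X)), set A_y and open
  neighbourhoods O(y,a) of y such that every point outside cl_\<theta>{y} \<union> cl(A_y) misses one of
  them. The closure of a set A has at most 2^(2^|A|) \<cdot> nu_s(X) points, since points of cl(A)
  with the same trace of neighbourhoods on A lie in one \<theta>-closure of a singleton. A closing-off
  argument of length s(X)^+ then yields a set M with |M| \<le> 2^(nu_s(X) \<cdot> 2^s(X)) that contains
  the \<theta>-closures of its points, the sets A_y, the closures of its small subsets, and a witness
  for every small family of the O(y,a) that fails to cover X together with the closure of its
  base points. A final application of Shapirovskii's lemma shows M = X.
\<close>

unbundle cardinal_syntax

section \<open>Cardinal arithmetic\<close>

lemma lepoll_iff_card_of_ordLeq: "A \<lesssim> B \<longleftrightarrow> |A| \<le>o |B|"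
  by (simp add: lepoll_def card_of_ordLeq[symmetric])

lemma UN_lepoll_infinite:
  assumes "infinite T" "I \<lesssim> T" "\<And>i. i \<in> I \<Longrightarrow> A i \<lesssim> T"
  shows "(\<Union>i\<in>I. A i) \<lesssim> T"
  using assms by (simp add: lepoll_iff_card_of_ordLeq card_of_UNION_ordLeq_infinite)

lemma Sigma_lepoll_infinite:
  assumes "infinite T" "I \<lesssim> T" "\<And>i. i \<in> I \<Longrightarrow> A i \<lesssim> T"
  shows "Sigma I A \<lesssim> T"
  using assms by (simp add: lepoll_iff_card_of_ordLeq card_of_Sigma_ordLeq_infinite)

lemma Un_lepoll_infinite:
  assumes "infinite T" "A \<lesssim> T" "B \<lesssim> T"
  shows "A \<union> B \<lesssim> T"
  using assms card_of_Un_ordLeq_infinite_Field[of "|T|" A B, OF _ _ _ card_of_Card_order]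
  by (simp add: lepoll_iff_card_of_ordLeq Field_card_of)

lemma Pow_lepoll_mono:
  assumes "A \<lesssim> B"
  shows "Pow A \<lesssim> Pow B"
proof -
  obtain f where f: "inj_on f A" "f ` A \<subseteq> B"
    using assms by (auto simp: lepoll_def)
  have "inj_on (image f) (Pow A)"
    using f(1) by (simp add: inj_on_def inj_on_image_eq_iff)
  moreover have "image f ` Pow A \<subseteq> Pow B"
    using f(2) by auto
  ultimately show ?thesis
    by (auto simp: lepoll_def)
qed

lemma Pow_lepoll_times_Pow:
  assumes "N \<noteq> {}"
  shows "Pow S \<lesssim> N \<times> Pow S"
proof -
  obtain n where "n \<in> N"
    using assms by blast
  then show ?thesis
    unfolding lepoll_def by (intro exI[of _ "Pair n"]) (auto simp: inj_on_def)
qed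

lemma lepoll_times_if_fibres_lepoll:
  assumes "f ` C \<subseteq> Q" and "\<And>q. q \<in> Q \<Longrightarrow> {x \<in> C. f x = q} \<lesssim> N"
  shows "C \<lesssim> Q \<times> N"
proof -
  have "C = (\<Union>q\<in>Q. {x \<in> C. f x = q})"
    using assms(1) by blast
  also have "\<dots> \<lesssim> (\<Union>q\<in>Q. {q} \<times> N)"
  proof (rule UN_lepoll_UN)
    show "{x \<in> C. f x = q} \<lesssim> {q} \<times> N" if "q \<in> Q" for q
      using assms(2)[OF that] eqpoll_sym[OF times_singleton_eqpoll] by (rule lepoll_trans2)
    show "pairwise (\<lambda>q q'. disjnt ({q} \<times> N) ({q'} \<times> N)) Q"
      by (auto simp: pairwise_def disjnt_def)
  qed
  also have "\<dots> = Q \<times> N"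
    by blast
  finally show ?thesis .
qed

section \<open>Closures and \<theta>-closures\<close>

definition nhds_trace :: "'a topology \<Rightarrow> 'a set \<Rightarrow> 'a \<Rightarrow> 'a set set" where
  "nhds_trace X A x = {U \<inter> A | U. openin X U \<and> x \<in> U}"

lemma theta_closure_if_same_nhds_trace:
  assumes x: "x \<in> topspace X" and y: "y \<in> X closure_of A"
    and trace: "nhds_trace X A x = nhds_trace X A y"
  shows "y \<in> theta_closure X {x}"
proof -
  have "x \<in> X closure_of B" if B: "openin X B" "y \<in> B" for B
  proof -
    have "\<exists>z. z \<in> B \<and> z \<in> U" if U: "x \<in> U" "openin X U" for U
    proof -
      have "U \<inter> A \<in> nhds_trace X A x"
        using U by (auto simp: nhds_trace_def)
      then have "U \<inter> A \<in> nhds_trace X A y"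
        by (simp only: trace)
      then obtain V where V: "openin X V" "y \<in> V" "U \<inter> A = V \<inter> A"
        unfolding nhds_trace_def by blast
      have "openin X (B \<inter> V)" "y \<in> B \<inter> V"
        using B V by auto
      then obtain a where "a \<in> A" "a \<in> B \<inter> V"
        using y unfolding in_closure_of by blast
      then show ?thesis
        using V(3) by blast
    qed
    then show ?thesis
      using x by (auto simp: in_closure_of)
  qed
  moreover have "y \<in> topspace X"
    by (meson y closure_of_subset_topspace subsetD)
  ultimately show ?thesis
    by (auto simp: theta_closure_def)
qed

lemma closure_of_lepoll_Pow_Pow_times:
  assumes theta: "\<And>x. x \<in> topspace X \<Longrightarrow> theta_closure X {x} \<lesssim> N"
  shows "X closure_of A \<lesssim> Pow (Pow A) \<times> N"
proof (rule lepoll_times_if_fibres_lepoll)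
  show "nhds_trace X A ` (X closure_of A) \<subseteq> Pow (Pow A)"
    by (auto simp: nhds_trace_def)
  fix q
  show "{x \<in> X closure_of A. nhds_trace X A x = q} \<lesssim> N"
  proof (cases "\<exists>x\<^sub>0 \<in> X closure_of A. nhds_trace X A x\<^sub>0 = q")
    case True
    then obtain x\<^sub>0 where x\<^sub>0: "x\<^sub>0 \<in> X closure_of A" "nhds_trace X A x\<^sub>0 = q"
      by blast
    then have x\<^sub>0X: "x\<^sub>0 \<in> topspace X"
      by (meson closure_of_subset_topspace subsetD)
    have "{x \<in> X closure_of A. nhds_trace X A x = q} \<subseteq> theta_closure X {x\<^sub>0}"
      using theta_closure_if_same_nhds_trace[OF x\<^sub>0X] x\<^sub>0(2) by auto
    then show ?thesis
      using theta[OF x\<^sub>0X] subset_imp_lepoll lepoll_trans by blast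
  next
    case False
    then have "{x \<in> X closure_of A. nhds_trace X A x = q} = {}"
      by blast
    then show ?thesis
      by (metis empty_lepoll)
  qed
qed

lemma closure_of_small_lepoll_Pow:
  fixes N :: "'n set" and S :: "'s set" and Z :: "'z set"
  assumes Z: "infinite Z" "Pow S \<lesssim> Z" and N: "N \<lesssim> Pow Z"
    and theta: "\<And>x. x \<in> topspace X \<Longrightarrow> theta_closure X {x} \<lesssim> N"
    and A: "A \<lesssim> S"
  shows "X closure_of A \<lesssim> Pow Z"
proof -
  have PZ: "infinite (Pow Z)"
    using Z(1) by (meson infinite_le_lepoll lepoll_Pow_self lepoll_trans)
  have "Pow A \<lesssim> Z"
    using Pow_lepoll_mono[OF A] Z(2) by (rule lepoll_trans)
  then have "Pow (Pow A) \<times> N \<lesssim> Pow Z"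
    by (rule Sigma_lepoll_infinite[OF PZ Pow_lepoll_mono]) (rule N)
  then show ?thesis
    using closure_of_lepoll_Pow_Pow_times[OF theta] lepoll_trans by blast
qed

section \<open>Shapirovskii's lemma\<close>

lemma discrete_subspace_if_isolated:
  assumes "D \<subseteq> topspace X" and "\<And>a. a \<in> D \<Longrightarrow> \<exists>V. openin X V \<and> V \<inter> D = {a}"
  shows "discrete_subspace X D"
proof -
  have "discrete_topology D = subtopology X D"
    unfolding discrete_topology_unique
  proof
    show "topspace (subtopology X D) = D"
      using assms(1) by auto
    show "\<forall>x\<in>D. openin (subtopology X D) {x}"
      using assms(2) unfolding openin_subtopology by metis
  qed
  then show ?thesis
    using assms(1) by (simp add: discrete_subspace_def)
qed

lemma discrete_subspace_if_left_separated:
  assumes "A \<subseteq> topspace X"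
    and total: "\<And>a b. a \<in> A \<Longrightarrow> b \<in> A \<Longrightarrow> a \<noteq> b \<Longrightarrow> (a, b) \<in> R \<or> (b, a) \<in> R"
    and left_separated: "\<And>a. a \<in> A \<Longrightarrow> a \<notin> X closure_of {b \<in> A. (b, a) \<in> R}"
    and U: "\<And>a. a \<in> A \<Longrightarrow> openin X (U a) \<and> a \<in> U a"
    and later_outside: "\<And>a b. a \<in> A \<Longrightarrow> b \<in> A \<Longrightarrow> (a, b) \<in> R \<Longrightarrow> b \<notin> U a"
  shows "discrete_subspace X A"
proof (rule discrete_subspace_if_isolated)
  fix a assume a: "a \<in> A"
  obtain W where W: "openin X W" "a \<in> W" "\<And>b. b \<in> A \<Longrightarrow> (b, a) \<in> R \<Longrightarrow> b \<notin> W"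
    using left_separated[OF a] a assms(1) unfolding in_closure_of by blast
  have "W \<inter> U a \<inter> A = {a}"
    using W U[OF a] later_outside[OF a] total[OF a] a by blast
  moreover have "openin X (W \<inter> U a)"
    using W(1) U[OF a] by blast
  ultimately show "\<exists>V. openin X V \<and> V \<inter> A = {a}"
    by blast
qed (fact assms(1))

lemma wf_exists_set_by_predecessors:
  assumes wf: "wf R"
  obtains A where "\<And>a. a \<in> A \<longleftrightarrow> P {b \<in> A. (b, a) \<in> R} a"
proof -
  define chosen where "chosen = wfrec R (\<lambda>f a. P {b. (b, a) \<in> R \<and> f b} a)"
  have "adm_wf R (\<lambda>f a. P {b. (b, a) \<in> R \<and> f b} a)"
    unfolding adm_wf_def
  proof (intro allI impI)
    fix f g :: "'a \<Rightarrow> bool" and a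
    assume "\<forall>b. (b, a) \<in> R \<longrightarrow> f b = g b"
    then have "{b. (b, a) \<in> R \<and> f b} = {b. (b, a) \<in> R \<and> g b}"
      by blast
    then show "P {b. (b, a) \<in> R \<and> f b} a = P {b. (b, a) \<in> R \<and> g b} a"
      by (rule arg_cong)
  qed
  then have fixpoint: "chosen = (\<lambda>a. P {b. (b, a) \<in> R \<and> chosen b} a)"
    unfolding chosen_def by (rule wfrec_fixpoint[OF wf])
  show thesis
  proof (rule that)
    fix a
    have "{b \<in> Collect chosen. (b, a) \<in> R} = {b. (b, a) \<in> R \<and> chosen b}"
      by auto
    then show "a \<in> Collect chosen \<longleftrightarrow> P {b \<in> Collect chosen. (b, a) \<in> R} a"
      using fun_cong[OF fixpoint, of a] by simp
  qed
qed

lemma discrete_subspace_cover: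
  assumes Y: "Y \<subseteq> topspace X" and U: "\<And>y. y \<in> Y \<Longrightarrow> openin X (U y) \<and> y \<in> U y"
  shows "\<exists>A \<subseteq> Y. discrete_subspace X A \<and> Y \<subseteq> X closure_of A \<union> (\<Union>a\<in>A. U a)"
proof -
  obtain W :: "'a rel" where "Well_order W \<and> Field W = UNIV"
    using well_ordering by (rule exE)
  then have W: "Well_order W" "Field W = UNIV"
    by blast+
  define R where "R = W - Id"
  have wf: "wf R"
    using W(1) by (simp add: R_def wo_rel.WF wo_rel_def)
  have total: "(a, b) \<in> R \<or> (b, a) \<in> R" if "a \<noteq> b" for a b
    using W that unfolding R_def well_order_on_def linear_order_on_def total_on_def by auto
  \<comment> \<open>Greedy choice along the well-order: a point is taken unless it lies in the closure,
    or in the neighbourhood, of an earlier chosen point.\<close>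
  obtain A where A: "\<And>a. a \<in> A \<longleftrightarrow> a \<in> Y \<and> a \<notin> X closure_of {b \<in> A. (b, a) \<in> R}
      \<and> (\<forall>b\<in>{b \<in> A. (b, a) \<in> R}. a \<notin> U b)"
    using wf_exists_set_by_predecessors[OF wf,
        where P = "\<lambda>C a. a \<in> Y \<and> a \<notin> X closure_of C \<and> (\<forall>b\<in>C. a \<notin> U b)"]
    by blast
  have "A \<subseteq> Y"
    using A by blast
  moreover have "discrete_subspace X A"
  proof (rule discrete_subspace_if_left_separated)
    show "A \<subseteq> topspace X"
      using Y \<open>A \<subseteq> Y\<close> by blast
    show "a \<notin> X closure_of {b \<in> A. (b, a) \<in> R}" if "a \<in> A" for a
      using A that by blast
    show "(a, b) \<in> R \<Longrightarrow> b \<notin> U a" if "a \<in> A" "b \<in> A" for a b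
      using A that by blast
    show "a \<in> A \<Longrightarrow> b \<in> A \<Longrightarrow> a \<noteq> b \<Longrightarrow> (a, b) \<in> R \<or> (b, a) \<in> R" for a b
      by (rule total)
    show "openin X (U a) \<and> a \<in> U a" if "a \<in> A" for a
      using U that \<open>A \<subseteq> Y\<close> by blast
  qed
  moreover have "Y \<subseteq> X closure_of A \<union> (\<Union>a\<in>A. U a)"
  proof
    fix y assume y: "y \<in> Y"
    have "X closure_of {b \<in> A. (b, y) \<in> R} \<subseteq> X closure_of A"
      by (rule closure_of_mono) blast
    moreover have "y \<in> X closure_of A" if "y \<in> A"
      using that Y \<open>A \<subseteq> Y\<close> closure_of_subset[of A X] by blast
    ultimately show "y \<in> X closure_of A \<union> (\<Union>a\<in>A. U a)"
      using A[of y] y by blast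
  qed
  ultimately show ?thesis
    by blast
qed

lemma theta_closure_separating_neighbourhoods:
  assumes small: "\<And>D. discrete_subspace X D \<Longrightarrow> D \<lesssim> S"
  obtains Ay :: "'a \<Rightarrow> 'a set" and Ob :: "'a \<Rightarrow> 'a \<Rightarrow> 'a set" where
    "\<And>y. y \<in> topspace X \<Longrightarrow> Ay y \<subseteq> topspace X \<and> Ay y \<lesssim> S"
    "\<And>y a. y \<in> topspace X \<Longrightarrow> a \<in> Ay y \<Longrightarrow> openin X (Ob y a) \<and> y \<in> Ob y a"
    "\<And>y p. y \<in> topspace X \<Longrightarrow> p \<in> topspace X - theta_closure X {y} - X closure_of (Ay y)
       \<Longrightarrow> \<exists>a\<in>Ay y. p \<notin> Ob y a"
proof -
  have "\<forall>y z. \<exists>B. y \<in> topspace X \<longrightarrow> z \<in> topspace X - theta_closure X {y} \<longrightarrow>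
          openin X B \<and> z \<in> B \<and> y \<notin> X closure_of B"
    unfolding theta_closure_def by blast
  then obtain B where B: "\<And>y z. y \<in> topspace X \<Longrightarrow> z \<in> topspace X - theta_closure X {y} \<Longrightarrow>
      openin X (B y z) \<and> z \<in> B y z \<and> y \<notin> X closure_of (B y z)"
    by metis
  have "\<forall>y. \<exists>A. y \<in> topspace X \<longrightarrow> A \<subseteq> topspace X - theta_closure X {y} \<and> discrete_subspace X A
          \<and> topspace X - theta_closure X {y} \<subseteq> X closure_of A \<union> (\<Union>a\<in>A. B y a)"
    using discrete_subspace_cover[where U = "B _"] B by (metis Diff_subset)
  then obtain Ay where Ay: "\<And>y. y \<in> topspace X \<Longrightarrow> Ay y \<subseteq> topspace X - theta_closure X {y}
      \<and> discrete_subspace X (Ay y) \<and> topspace X - theta_closure X {y} \<subseteq> X closure_of (Ay y) \<union> (\<Union>a\<in>Ay y. B y a)"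
    by metis
  \<comment> \<open>The neighbourhood of y attached to a is the complement of the closure of B y a.\<close>
  show thesis
  proof
    show "Ay y \<subseteq> topspace X \<and> Ay y \<lesssim> S" if "y \<in> topspace X" for y
      using Ay[OF that] small by blast
    show "openin X (topspace X - X closure_of B y a) \<and> y \<in> topspace X - X closure_of B y a"
      if y: "y \<in> topspace X" and a: "a \<in> Ay y" for y a
    proof -
      have "a \<in> topspace X - theta_closure X {y}"
        using Ay[OF y] a by blast
      then show ?thesis
        using B[OF y] y by (simp add: openin_diff closedin_closure_of)
    qed
    show "\<exists>a\<in>Ay y. p \<notin> topspace X - X closure_of B y a"
      if y: "y \<in> topspace X" and p: "p \<in> topspace X - theta_closure X {y} - X closure_of (Ay y)"
      for y p
    proof -
      obtain a where a: "a \<in> Ay y" "p \<in> B y a"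
        using Ay[OF y] p by blast
      have "a \<in> topspace X - theta_closure X {y}"
        using Ay[OF y] a(1) by blast
      then have "p \<in> X closure_of B y a"
        using B[OF y] a(2) closure_of_subset[OF openin_subset] by blast
      then show ?thesis
        using a(1) by blast
    qed
  qed
qed

section \<open>Counting small subsets\<close>

lemma small_subsets_lepoll_Pow_times:
  fixes Q :: "'q set" and S :: "'s set" and Z :: "'z set"
  assumes k: "inj_on k Q" and k_range: "\<And>b. b \<in> Q \<Longrightarrow> k b \<noteq> {} \<and> k b \<subseteq> Z"
  shows "{B. B \<subseteq> Q \<and> B \<lesssim> S} \<lesssim> Pow (S \<times> Z)"
proof -
  have "\<forall>B :: 'q set. \<exists>f. B \<lesssim> S \<longrightarrow> inj_on f B \<and> f ` B \<subseteq> S"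
    unfolding lepoll_def by blast
  then obtain e where e: "\<forall>B :: 'q set. B \<lesssim> S \<longrightarrow> inj_on (e B) B \<and> e B ` B \<subseteq> S"
    by (rule choice[THEN exE])
  define code where "code B = (\<Union>b\<in>B. {e B b} \<times> k b)" for B :: "'q set"
  have decode: "B = {b \<in> Q. \<exists>s. code B `` {s} = k b}" if B: "B \<subseteq> Q" "B \<lesssim> S" for B
  proof -
    have fibre: "code B `` {e B b} = k b" if "b \<in> B" for b
      using e[rule_format, OF B(2)] that unfolding code_def inj_on_def by auto
    have "b \<in> B" if b: "b \<in> Q" "code B `` {s} = k b" for b s
    proof -
      obtain b' where b': "b' \<in> B" "s = e B b'"
        using b k_range[OF b(1)] unfolding code_def by auto
      then have "k b = k b'"
        using fibre b(2) by simp
      then show ?thesis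
        using k b' B(1) b(1) by (metis inj_onD subsetD)
    qed
    then show ?thesis
      using fibre B(1) by blast
  qed
  have "inj_on code {B. B \<subseteq> Q \<and> B \<lesssim> S}"
  proof (rule inj_onI)
    fix B B' assume "B \<in> {B. B \<subseteq> Q \<and> B \<lesssim> S}" "B' \<in> {B. B \<subseteq> Q \<and> B \<lesssim> S}" "code B = code B'"
    then show "B = B'"
      using decode[of B] decode[of B'] by simp
  qed
  moreover have "code ` {B. B \<subseteq> Q \<and> B \<lesssim> S} \<subseteq> Pow (S \<times> Z)"
    using e k_range unfolding code_def by fastforce
  ultimately show ?thesis
    unfolding lepoll_def by blast
qed

lemma small_subsets_lepoll_Pow:
  fixes Q :: "'q set" and S :: "'s set" and Z :: "'z set"
  assumes Z: "infinite Z" and S: "S \<lesssim> Z" and Q: "Q \<lesssim> Pow Z"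
  shows "{B. B \<subseteq> Q \<and> B \<lesssim> S} \<lesssim> Pow Z"
proof -
  obtain h where h: "inj_on h Q" "h ` Q \<subseteq> Pow Z"
    using Q unfolding lepoll_def by blast
  define Z' where "Z' = insert None (Some ` Z)"
  have "{B. B \<subseteq> Q \<and> B \<lesssim> S} \<lesssim> Pow (S \<times> Z')"
  proof (rule small_subsets_lepoll_Pow_times)
    show "inj_on (\<lambda>b. insert None (Some ` h b)) Q"
    proof (rule inj_onI)
      fix b b' assume "b \<in> Q" "b' \<in> Q" "insert None (Some ` h b) = insert None (Some ` h b')"
      moreover have "Some -` insert None (Some ` A) = A" for A :: "'z set"
        by auto
      ultimately show "b = b'"
        using h(1) by (metis inj_onD)
    qed
    show "insert None (Some ` h b) \<noteq> {} \<and> insert None (Some ` h b) \<subseteq> Z'" if "b \<in> Q" for b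
      using h(2) that by (auto simp: Z'_def)
  qed
  also have "Pow (S \<times> Z') \<lesssim> Pow Z"
  proof (rule Pow_lepoll_mono)
    have "infinite (Some ` Z)"
      using Z by (simp add: finite_image_iff)
    then have "Z' \<approx> Some ` Z"
      unfolding Z'_def by (rule infinite_insert_eqpoll)
    then have "Z' \<lesssim> Z"
      by (simp add: eqpoll_imp_lepoll)
    show "S \<times> Z' \<lesssim> Z"
      by (rule Sigma_lepoll_infinite[OF Z S]) (rule \<open>Z' \<lesssim> Z\<close>)
  qed
  finally show ?thesis .
qed

section \<open>Closing off along the successor cardinal\<close>

lemma cardSuc_underS_lepoll:
  assumes "i \<in> Field (cardSuc (card_of S))"
  shows "underS (cardSuc (card_of S)) i \<lesssim> S"
proof -
  have "|underS (cardSuc (card_of S)) i| <o cardSuc (card_of S)"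
    by (rule card_of_underS[OF cardSuc_Card_order[OF card_of_Card_order] assms])
  then show ?thesis
    by (simp add: lepoll_iff_card_of_ordLeq cardSuc_ordLeq_ordLess card_of_Card_order)
qed

lemma Field_cardSuc_lepoll_Pow: "Field (cardSuc (card_of S)) \<lesssim> Pow S"
proof -
  have "|Field (cardSuc (card_of S))| =o cardSuc (card_of S)"
    by (rule card_of_Field_ordIso[OF cardSuc_Card_order[OF card_of_Card_order]])
  moreover have "cardSuc (card_of S) \<le>o |Pow S|"
    using cardSuc_ordLess_ordLeq[OF card_of_Card_order card_of_Card_order] card_of_Pow by blast
  ultimately show ?thesis
    unfolding lepoll_iff_card_of_ordLeq by (rule ordIso_ordLeq_trans)
qed

lemma Card_order_infinite_underS_unbounded:
  assumes r: "Card_order r" and "infinite (Field r)" and i: "i \<in> Field r"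
  obtains j where "j \<in> Field r" "i \<in> underS r j"
proof -
  have "Field r \<noteq> under r i"
    using Card_order_infinite_not_under[OF r] assms(2) by blast
  moreover have "under r i \<subseteq> Field r"
    by (auto simp: under_def Field_def)
  ultimately obtain j where j: "j \<in> Field r" "(j, i) \<notin> r"
    by (auto simp: under_def)
  have "Well_order r"
    using r by (simp add: card_order_on_def)
  then have "(i, j) \<in> r \<and> i \<noteq> j"
    using i j unfolding well_order_on_def linear_order_on_def partial_order_on_def
      preorder_on_def refl_on_def total_on_def by metis
  then show thesis
    using that j(1) by (auto simp: underS_def)
qed

definition union_below :: "'i rel \<Rightarrow> ('i \<Rightarrow> 'a set) \<Rightarrow> 'i \<Rightarrow> 'a set" where
  "union_below W f i = (\<Union>j\<in>underS W i. f j)"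

lemma transfinite_chain_exists:
  assumes "Well_order W"
  obtains f :: "'i \<Rightarrow> 'a set" where "\<And>i. f i = union_below W f i \<union> G (union_below W f i)"
proof -
  define step where "step f i = union_below W f i \<union> G (union_below W f i)"
    for f :: "'i \<Rightarrow> 'a set" and i
  have wf: "wf (W - Id)"
    using assms by (simp add: wo_rel.WF wo_rel_def)
  have "adm_wf (W - Id) step"
    by (auto simp: adm_wf_def step_def union_below_def underS_def
        intro!: arg_cong[where f = "\<lambda>M. M \<union> G M"])
  then have "wfrec (W - Id) step i = step (wfrec (W - Id) step) i" for i
    by (rule fun_cong[OF wfrec_fixpoint[OF wf]])
  then show thesis
    unfolding step_def by (rule that)
qed

lemma transfinite_chain_relChain:
  assumes "\<And>i. f i = union_below W f i \<union> G (union_below W f i)"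
  shows "relChain W f"
  unfolding relChain_def
proof (intro allI impI)
  fix j i assume ji: "(j, i) \<in> W"
  show "f j \<subseteq> f i"
  proof (cases "j = i")
    case False
    then have "f j \<subseteq> union_below W f i"
      using ji by (auto simp: union_below_def underS_def)
    then show ?thesis
      using assms[of i] by blast
  qed simp
qed

lemma transfinite_chain_bounded:
  assumes f: "\<And>i. f i = union_below W f i \<union> G (union_below W f i)"
    and "Well_order W" and below_small: "\<And>i. i \<in> Field W \<Longrightarrow> underS W i \<lesssim> T"
    and G_into: "\<And>M. M \<subseteq> U \<Longrightarrow> G M \<subseteq> U"
    and G_size: "\<And>M. M \<subseteq> U \<Longrightarrow> M \<lesssim> T \<Longrightarrow> G M \<lesssim> T"
    and T: "infinite T"
  shows "f i \<subseteq> U \<and> f i \<lesssim> T"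
proof -
  have wf: "wf (W - Id)"
    using \<open>Well_order W\<close> by (simp add: wo_rel.WF wo_rel_def)
  show ?thesis
  proof (induction i rule: wf_induct_rule[OF wf])
    case (1 i)
    have below: "union_below W f i \<subseteq> U \<and> union_below W f i \<lesssim> T"
    proof (cases "i \<in> Field W")
      case True
      have "union_below W f i \<lesssim> T"
        unfolding union_below_def
        by (rule UN_lepoll_infinite[OF T below_small[OF True]]) (use 1 in \<open>auto simp: underS_def\<close>)
      moreover have "union_below W f i \<subseteq> U"
        using 1 by (auto simp: union_below_def underS_def)
      ultimately show ?thesis
        by blast
    next
      case False
      then have "underS W i = {}"
        by (auto simp: underS_def Field_def)
      then show ?thesis
        by (simp add: union_below_def)
    qed
    then have "G (union_below W f i) \<subseteq> U \<and> G (union_below W f i) \<lesssim> T"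
      using G_into G_size by blast
    then show ?case
      unfolding f[of i] using below T Un_lepoll_infinite by blast
  qed
qed

lemma cardSuc_relChain_small_subset:
  assumes S: "infinite S" and chain: "relChain (cardSuc (card_of S)) f"
    and B: "B \<subseteq> (\<Union>i\<in>Field (cardSuc (card_of S)). f i)" "B \<lesssim> S"
  obtains j where "j \<in> Field (cardSuc (card_of S))" "B \<subseteq> union_below (cardSuc (card_of S)) f j"
proof -
  have "\<exists>i\<in>Field (cardSuc (card_of S)). B \<subseteq> f i"
  proof (rule cardSuc_UNION[OF card_of_Card_order _ chain B(1)])
    show "infinite (Field (card_of S))"
      using S by (simp add: Field_card_of)
    show "|B| \<le>o |S|"
      using B(2) by (simp add: lepoll_iff_card_of_ordLeq)
  qed
  then obtain i where i: "i \<in> Field (cardSuc (card_of S))" "B \<subseteq> f i"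
    by blast
  have "infinite (Field (cardSuc (card_of S)))"
    using cardSuc_finite[OF card_of_Card_order, of S] Field_card_of[of S] S by simp
  then obtain j where "j \<in> Field (cardSuc (card_of S))" "i \<in> underS (cardSuc (card_of S)) j"
    using Card_order_infinite_underS_unbounded[OF cardSuc_Card_order[OF card_of_Card_order] _ i(1)]
    by blast
  with i(2) show thesis
    by (intro that) (auto simp: union_below_def)
qed

lemma closing_off:
  fixes G :: "'a set \<Rightarrow> 'a set" and S :: "'s set" and T :: "'t set"
  assumes "mono G" and G_into: "\<And>M. M \<subseteq> U \<Longrightarrow> G M \<subseteq> U"
    and G_size: "\<And>M. M \<subseteq> U \<Longrightarrow> M \<lesssim> T \<Longrightarrow> G M \<lesssim> T"
    and S: "infinite S" and PowS: "Pow S \<lesssim> T"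
  obtains M where "M \<subseteq> U" "M \<lesssim> T" "\<And>B. B \<subseteq> M \<Longrightarrow> B \<lesssim> S \<Longrightarrow> G B \<subseteq> M"
proof -
  define W where "W = cardSuc (card_of S)"
  have W: "Well_order W"
    unfolding W_def by (rule card_order_on_well_order_on[OF cardSuc_Card_order[OF card_of_Card_order]])
  have "S \<lesssim> T"
    using lepoll_Pow_self PowS by (rule lepoll_trans)
  then have T: "infinite T" "S \<lesssim> T"
    using S by (meson infinite_le_lepoll lepoll_trans)+
  \<comment> \<open>A chain of length the successor cardinal of S: a set of size at most S inside its union
    lies below a single stage, so the union is closed under G of small sets.\<close>
  obtain stage :: "'s set \<Rightarrow> 'a set"
    where stage: "\<And>i. stage i = union_below W stage i \<union> G (union_below W stage i)"
    using transfinite_chain_exists[OF W] by blast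
  have stage_small: "stage i \<subseteq> U \<and> stage i \<lesssim> T" for i
  proof (rule transfinite_chain_bounded[OF stage W _ G_into G_size T(1)])
    show "underS W i \<lesssim> T" if "i \<in> Field W" for i
      using cardSuc_underS_lepoll[of i S] that T(2) lepoll_trans by (auto simp: W_def)
  qed
  define M where "M = (\<Union>i\<in>Field W. stage i)"
  show thesis
  proof
    show "M \<subseteq> U"
      using stage_small by (auto simp: M_def)
    have "Field W \<lesssim> T"
      using Field_cardSuc_lepoll_Pow PowS lepoll_trans by (auto simp: W_def)
    then show "M \<lesssim> T"
      unfolding M_def using stage_small T(1) UN_lepoll_infinite by blast
    fix B assume "B \<subseteq> M" "B \<lesssim> S"
    then obtain j where j: "j \<in> Field W" "B \<subseteq> union_below W stage j"
      using cardSuc_relChain_small_subset[OF S transfinite_chain_relChain[OF stage, unfolded W_def]]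
      unfolding M_def W_def by blast
    then have "G B \<subseteq> stage j"
      using \<open>mono G\<close> stage[of j] by (auto dest: monoD)
    then show "G B \<subseteq> M"
      using j(1) by (auto simp: M_def)
  qed
qed

definition nbhd_cover :: "'a topology \<Rightarrow> ('a \<Rightarrow> 'b \<Rightarrow> 'a set) \<Rightarrow> ('a \<times> 'b) set \<Rightarrow> 'a set" where
  "nbhd_cover X Ob B = X closure_of (fst ` B) \<union> (\<Union>(y, a)\<in>B. Ob y a)"

lemma topspace_subset_if_saturated:
  assumes small: "\<And>D. discrete_subspace X D \<Longrightarrow> D \<lesssim> S"
    and Ob: "\<And>y a. y \<in> topspace X \<Longrightarrow> a \<in> Ay y \<Longrightarrow> openin X (Ob y a) \<and> y \<in> Ob y a"
    and sep: "\<And>y p. y \<in> topspace X \<Longrightarrow> p \<in> topspace X - theta_closure X {y} - X closure_of (Ay y)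
       \<Longrightarrow> \<exists>a\<in>Ay y. p \<notin> Ob y a"
    and M: "M \<subseteq> topspace X"
    and theta: "\<And>y. y \<in> M \<Longrightarrow> theta_closure X {y} \<subseteq> M"
    and Ay: "\<And>y. y \<in> M \<Longrightarrow> X closure_of (Ay y) \<subseteq> M"
    and closure: "\<And>A. A \<subseteq> M \<Longrightarrow> A \<lesssim> S \<Longrightarrow> X closure_of A \<subseteq> M"
    and cover: "\<And>B. B \<subseteq> Sigma M Ay \<Longrightarrow> B \<lesssim> S \<Longrightarrow> M \<subseteq> nbhd_cover X Ob B
       \<Longrightarrow> topspace X \<subseteq> nbhd_cover X Ob B"
  shows "topspace X \<subseteq> M"
proof
  fix p assume p: "p \<in> topspace X"
  show "p \<in> M"
  proof (rule ccontr)
    assume "p \<notin> M"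
    \<comment> \<open>Every y in M has a neighbourhood missing p; Shapirovskii's lemma turns these into a
      small family whose cover contains M, hence all of X, but not p.\<close>
    have "\<exists>a\<in>Ay y. p \<notin> Ob y a" if "y \<in> M" for y
      using sep[of y p] p \<open>p \<notin> M\<close> M theta[OF that] Ay[OF that] that by blast
    then obtain ch where ch: "\<And>y. y \<in> M \<Longrightarrow> ch y \<in> Ay y \<and> p \<notin> Ob y (ch y)"
      by metis
    obtain A where A: "A \<subseteq> M" "discrete_subspace X A" "M \<subseteq> X closure_of A \<union> (\<Union>a\<in>A. Ob a (ch a))"
      using discrete_subspace_cover[OF M, of "\<lambda>y. Ob y (ch y)"] Ob ch M by blast
    have "A \<lesssim> S"
      using small A(2) by blast
    define B where "B = (\<lambda>y. (y, ch y)) ` A"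
    have cov: "nbhd_cover X Ob B = X closure_of A \<union> (\<Union>a\<in>A. Ob a (ch a))"
      by (simp add: nbhd_cover_def B_def image_image)
    have "B \<subseteq> Sigma M Ay"
      using A(1) ch by (auto simp: B_def)
    moreover have "B \<lesssim> S"
      unfolding B_def using image_lepoll \<open>A \<lesssim> S\<close> by (rule lepoll_trans)
    ultimately have "p \<in> nbhd_cover X Ob B"
      using cover A(3) cov p by blast
    moreover have "p \<notin> X closure_of A"
      using closure[OF A(1) \<open>A \<lesssim> S\<close>] \<open>p \<notin> M\<close> by blast
    ultimately show False
      using ch A(1) cov by auto
  qed
qed

definition uncovered_point :: "'a topology \<Rightarrow> ('a \<Rightarrow> 'b \<Rightarrow> 'a set) \<Rightarrow> ('a \<times> 'b) set \<Rightarrow> 'a" where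
  "uncovered_point X Ob B = (SOME p. p \<in> topspace X - nbhd_cover X Ob B)"

lemma uncovered_point:
  assumes "\<not> topspace X \<subseteq> nbhd_cover X Ob B"
  shows "uncovered_point X Ob B \<in> topspace X - nbhd_cover X Ob B"
  unfolding uncovered_point_def by (rule someI_ex) (use assms in blast)

definition closing_step ::
    "'a topology \<Rightarrow> 's set \<Rightarrow> ('a \<Rightarrow> 'a set) \<Rightarrow> ('a \<Rightarrow> 'a \<Rightarrow> 'a set) \<Rightarrow> 'a set \<Rightarrow> 'a set" where
  "closing_step X S Ay Ob M =
     (\<Union>y\<in>M. theta_closure X {y} \<union> Ay y)
     \<union> (\<Union>A\<in>{A. A \<subseteq> M \<and> A \<lesssim> S}. X closure_of A)
     \<union> uncovered_point X Ob ` {B. B \<subseteq> Sigma M Ay \<and> B \<lesssim> S \<and> \<not> topspace X \<subseteq> nbhd_cover X Ob B}"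

lemma mono_closing_step: "mono (closing_step X S Ay Ob)"
proof (rule monoI)
  fix M M' :: "'a set" assume "M \<subseteq> M'"
  then have "{B. B \<subseteq> Sigma M Ay \<and> P B} \<subseteq> {B. B \<subseteq> Sigma M' Ay \<and> P B}" for P
    by auto
  moreover have "{A. A \<subseteq> M \<and> A \<lesssim> S} \<subseteq> {A. A \<subseteq> M' \<and> A \<lesssim> S}"
    using \<open>M \<subseteq> M'\<close> by auto
  ultimately show "closing_step X S Ay Ob M \<subseteq> closing_step X S Ay Ob M'"
    unfolding closing_step_def using \<open>M \<subseteq> M'\<close>
    by (intro Un_mono UN_mono image_mono) auto
qed

lemma closing_step_subset_topspace:
  assumes "\<And>y. y \<in> topspace X \<Longrightarrow> Ay y \<subseteq> topspace X" and "M \<subseteq> topspace X"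
  shows "closing_step X S Ay Ob M \<subseteq> topspace X"
proof -
  have "uncovered_point X Ob ` {B. B \<subseteq> Sigma M Ay \<and> B \<lesssim> S \<and> \<not> topspace X \<subseteq> nbhd_cover X Ob B}
      \<subseteq> topspace X"
  proof (rule image_subsetI)
    fix B assume "B \<in> {B. B \<subseteq> Sigma M Ay \<and> B \<lesssim> S \<and> \<not> topspace X \<subseteq> nbhd_cover X Ob B}"
    then show "uncovered_point X Ob B \<in> topspace X"
      using uncovered_point[of X Ob B] by blast
  qed
  moreover have "(\<Union>y\<in>M. theta_closure X {y} \<union> Ay y) \<subseteq> topspace X"
    using assms by (auto simp: theta_closure_def)
  moreover have "(\<Union>A\<in>{A. A \<subseteq> M \<and> A \<lesssim> S}. X closure_of A) \<subseteq> topspace X"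
    by (intro UN_least closure_of_subset_topspace)
  ultimately show ?thesis
    unfolding closing_step_def by (intro Un_least)
qed

lemma closing_step_lepoll:
  fixes N :: "'n set" and S :: "'s set" and Z :: "'z set"
  assumes Z: "infinite Z" "Pow S \<lesssim> Z" and N: "N \<lesssim> Pow Z"
    and theta: "\<And>x. x \<in> topspace X \<Longrightarrow> theta_closure X {x} \<lesssim> N"
    and Ay: "\<And>y. y \<in> topspace X \<Longrightarrow> Ay y \<lesssim> S"
    and M: "M \<subseteq> topspace X" "M \<lesssim> Pow Z"
  shows "closing_step X S Ay Ob M \<lesssim> Pow Z"
proof -
  have "S \<lesssim> Z"
    using lepoll_Pow_self Z(2) by (rule lepoll_trans)
  then have S: "S \<lesssim> Z" "S \<lesssim> Pow Z"
    using lepoll_Pow_self lepoll_trans by blast+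
  have PZ: "infinite (Pow Z)"
    using Z(1) by (meson infinite_le_lepoll lepoll_Pow_self lepoll_trans)
  have small_subsets: "{B. B \<subseteq> Q \<and> B \<lesssim> S} \<lesssim> Pow Z" if "Q \<lesssim> Pow Z" for Q :: "'q set"
    by (rule small_subsets_lepoll_Pow[OF Z(1) S(1) that])
  have "theta_closure X {y} \<union> Ay y \<lesssim> Pow Z" if "y \<in> M" for y
  proof -
    have "y \<in> topspace X"
      using that M(1) by blast
    then show ?thesis
      using Un_lepoll_infinite[OF PZ lepoll_trans[OF theta N] lepoll_trans[OF Ay S(2)]] by blast
  qed
  then have "(\<Union>y\<in>M. theta_closure X {y} \<union> Ay y) \<lesssim> Pow Z"
    by (rule UN_lepoll_infinite[OF PZ M(2)])
  moreover have "(\<Union>A\<in>{A. A \<subseteq> M \<and> A \<lesssim> S}. X closure_of A) \<lesssim> Pow Z"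
    by (rule UN_lepoll_infinite[OF PZ small_subsets[OF M(2)]])
      (use closure_of_small_lepoll_Pow[OF Z N theta] in blast)
  moreover have "uncovered_point X Ob
      ` {B. B \<subseteq> Sigma M Ay \<and> B \<lesssim> S \<and> \<not> topspace X \<subseteq> nbhd_cover X Ob B} \<lesssim> Pow Z"
  proof -
    have "Sigma M Ay \<lesssim> Pow Z"
      by (rule Sigma_lepoll_infinite[OF PZ M(2)]) (meson Ay M(1) S(2) lepoll_trans subsetD)
    have "uncovered_point X Ob
        ` {B. B \<subseteq> Sigma M Ay \<and> B \<lesssim> S \<and> \<not> topspace X \<subseteq> nbhd_cover X Ob B}
      \<lesssim> {B. B \<subseteq> Sigma M Ay \<and> B \<lesssim> S \<and> \<not> topspace X \<subseteq> nbhd_cover X Ob B}"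
      by (rule image_lepoll)
    also have "\<dots> \<lesssim> {B. B \<subseteq> Sigma M Ay \<and> B \<lesssim> S}"
      by (rule subset_imp_lepoll) blast
    also have "\<dots> \<lesssim> Pow Z"
      by (rule small_subsets) fact
    finally show ?thesis .
  qed
  ultimately show ?thesis
    unfolding closing_step_def using PZ by (intro Un_lepoll_infinite)
qed

lemma topspace_subset_if_closing_step_closed:
  assumes small: "\<And>D. discrete_subspace X D \<Longrightarrow> D \<lesssim> S" and S: "infinite S"
    and Ay: "\<And>y. y \<in> topspace X \<Longrightarrow> Ay y \<subseteq> topspace X \<and> Ay y \<lesssim> S"
    and Ob: "\<And>y a. y \<in> topspace X \<Longrightarrow> a \<in> Ay y \<Longrightarrow> openin X (Ob y a) \<and> y \<in> Ob y a"
    and sep: "\<And>y p. y \<in> topspace X \<Longrightarrow> p \<in> topspace X - theta_closure X {y} - X closure_of (Ay y)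
       \<Longrightarrow> \<exists>a\<in>Ay y. p \<notin> Ob y a"
    and M: "M \<subseteq> topspace X"
    and closed: "\<And>B. B \<subseteq> M \<Longrightarrow> B \<lesssim> S \<Longrightarrow> closing_step X S Ay Ob B \<subseteq> M"
  shows "topspace X \<subseteq> M"
proof (rule topspace_subset_if_saturated[OF small Ob sep M])
  fix y assume "y \<in> M"
  then have "{y} \<lesssim> S" "y \<in> topspace X"
    using S M by (auto intro: finite_lepoll_infinite)
  then have "theta_closure X {y} \<union> Ay y \<subseteq> M"
    using closed[of "{y}"] \<open>y \<in> M\<close> unfolding closing_step_def by blast
  then show "theta_closure X {y} \<subseteq> M" "X closure_of Ay y \<subseteq> M"
    using closed[of "Ay y"] Ay[OF \<open>y \<in> topspace X\<close>] unfolding closing_step_def by blast+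
next
  show "X closure_of A \<subseteq> M" if "A \<subseteq> M" "A \<lesssim> S" for A
    using closed[OF that] that unfolding closing_step_def by blast
next
  fix B assume B: "B \<subseteq> Sigma M Ay" "B \<lesssim> S" "M \<subseteq> nbhd_cover X Ob B"
  show "topspace X \<subseteq> nbhd_cover X Ob B"
  proof (rule ccontr)
    assume uncovered: "\<not> topspace X \<subseteq> nbhd_cover X Ob B"
    have "fst ` B \<subseteq> M" "fst ` B \<lesssim> S"
      using B image_lepoll lepoll_trans by force+
    have "B \<subseteq> Sigma (fst ` B) Ay"
      using B(1) by force
    then have "B \<in> {B'. B' \<subseteq> Sigma (fst ` B) Ay \<and> B' \<lesssim> S \<and> \<not> topspace X \<subseteq> nbhd_cover X Ob B'}"
      using B(2) uncovered by blast
    then have "uncovered_point X Ob B \<in> closing_step X S Ay Ob (fst ` B)"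
      unfolding closing_step_def by (rule UnI2[OF imageI])
    then show False
      using closed[OF \<open>fst ` B \<subseteq> M\<close> \<open>fst ` B \<lesssim> S\<close>] B(3) uncovered_point[OF uncovered] by blast
  qed
qed

lemma topspace_lepoll_Pow_times_Pow:
  fixes X :: "'a topology" and N :: "'n set" and S :: "'s set"
  assumes theta: "\<And>x. x \<in> topspace X \<Longrightarrow> theta_closure X {x} \<lesssim> N" and "N \<noteq> {}"
    and small: "\<And>D. discrete_subspace X D \<Longrightarrow> D \<lesssim> S" and S: "infinite S"
  shows "topspace X \<lesssim> Pow (N \<times> Pow S)"
proof -
  obtain Ay Ob where Ay: "\<And>y. y \<in> topspace X \<Longrightarrow> Ay y \<subseteq> topspace X \<and> Ay y \<lesssim> S"
    and Ob: "\<And>y a. y \<in> topspace X \<Longrightarrow> a \<in> Ay y \<Longrightarrow> openin X (Ob y a) \<and> y \<in> Ob y a"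
    and sep: "\<And>y p. y \<in> topspace X \<Longrightarrow> p \<in> topspace X - theta_closure X {y} - X closure_of (Ay y)
       \<Longrightarrow> \<exists>a\<in>Ay y. p \<notin> Ob y a"
    using theta_closure_separating_neighbourhoods[OF small] by blast
  have PowS: "Pow S \<lesssim> N \<times> Pow S"
    using \<open>N \<noteq> {}\<close> by (rule Pow_lepoll_times_Pow)
  then have Z: "infinite (N \<times> Pow S)"
    using S by (meson infinite_le_lepoll lepoll_Pow_self lepoll_trans)
  have N: "N \<lesssim> Pow (N \<times> Pow S)"
    unfolding lepoll_def by (intro exI[of _ "\<lambda>m. {(m, {})}"]) (auto simp: inj_on_def)
  obtain M where M: "M \<subseteq> topspace X" "M \<lesssim> Pow (N \<times> Pow S)"
    and closed: "\<And>B. B \<subseteq> M \<Longrightarrow> B \<lesssim> S \<Longrightarrow> closing_step X S Ay Ob B \<subseteq> M"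
  proof (rule closing_off[OF mono_closing_step _ _ S])
    show "closing_step X S Ay Ob M \<subseteq> topspace X" if "M \<subseteq> topspace X" for M
      by (rule closing_step_subset_topspace) (use Ay that in auto)
    show "closing_step X S Ay Ob M \<lesssim> Pow (N \<times> Pow S)"
      if "M \<subseteq> topspace X" "M \<lesssim> Pow (N \<times> Pow S)" for M
      by (rule closing_step_lepoll[OF Z PowS N theta]) (use Ay that in auto)
    show "Pow S \<lesssim> Pow (N \<times> Pow S)"
      using PowS lepoll_Pow_self by (rule lepoll_trans)
  qed (rule that)
  have "topspace X \<subseteq> M"
    by (rule topspace_subset_if_closing_step_closed[OF small S Ay Ob sep M(1) closed])
  then show ?thesis
    using M(2) subset_imp_lepoll lepoll_trans by blast
qed

lemma is_nu_s_theta_closure_lepoll: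
  fixes N :: "'b set"
  assumes "is_nu_s X N" and "x \<in> topspace X"
  shows "theta_closure X {x} \<lesssim> N"
proof -
  obtain K :: "'b set" where K: "is_card_sup (topspace X) (\<lambda>x. theta_closure X {x}) K"
    and N: "N \<approx> {()} <+> K"
    using assms(1) unfolding is_nu_s_def by blast
  have "theta_closure X {x} \<lesssim> K"
    using K assms(2) unfolding is_card_sup_def by blast
  also have "K \<lesssim> {()} <+> K"
    unfolding lepoll_def by (rule exI[of _ Inr]) auto
  also have "{()} <+> K \<lesssim> N"
    using eqpoll_sym[OF N] by (rule eqpoll_imp_lepoll)
  finally show ?thesis .
qed

lemma is_nu_s_nonempty:
  fixes N :: "'b set"
  assumes "is_nu_s X N"
  shows "N \<noteq> {}"
proof
  obtain K :: "'b set" where N: "N \<approx> {()} <+> K"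
    using assms unfolding is_nu_s_def by blast
  assume "N = {}"
  then have "{()} <+> K = {}"
    using eqpoll_sym[OF N] by simp
  then show False
    by blast
qed

lemma is_spread_discrete_lepoll:
  fixes S :: "'b set"
  assumes "is_spread X S" and "discrete_subspace X D"
  shows "D \<lesssim> S"
proof -
  obtain K :: "'b set" where K: "is_card_sup {D. discrete_subspace X D} id K"
    and S: "S \<approx> K <+> (UNIV :: nat set)"
    using assms(1) unfolding is_spread_def by blast
  have "D \<lesssim> K"
    using K assms(2) unfolding is_card_sup_def by auto
  also have "K \<lesssim> K <+> (UNIV :: nat set)"
    unfolding lepoll_def by (rule exI[of _ Inl]) auto
  also have "K <+> (UNIV :: nat set) \<lesssim> S"
    using eqpoll_sym[OF S] by (rule eqpoll_imp_lepoll)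
  finally show ?thesis .
qed

lemma is_spread_infinite:
  fixes S :: "'b set"
  assumes "is_spread X S"
  shows "infinite S"
proof -
  obtain K :: "'b set" where S: "S \<approx> K <+> (UNIV :: nat set)"
    using assms unfolding is_spread_def by blast
  have "(UNIV :: nat set) \<lesssim> K <+> (UNIV :: nat set)"
    unfolding lepoll_def by (rule exI[of _ Inr]) auto
  also have "K <+> (UNIV :: nat set) \<lesssim> S"
    using eqpoll_sym[OF S] by (rule eqpoll_imp_lepoll)
  finally show ?thesis
    by (simp add: infinite_le_lepoll)
qed

theorem theorem3p12:
  fixes X :: "'a topology" and N :: "'b set" and S :: "'c set"
  assumes "infinite (topspace X)"
    and "t1_space X"
    and "is_nu_s X N"
    and "is_spread X S"
  shows "topspace X \<lesssim> Pow (N \<times> Pow S)"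
  using topspace_lepoll_Pow_times_Pow[OF is_nu_s_theta_closure_lepoll[OF assms(3)]
      is_nu_s_nonempty[OF assms(3)] is_spread_discrete_lepoll[OF assms(4)] is_spread_infinite[OF assms(4)]] .

end
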